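(* Let $F$ be a Banach lattice and $\tau$ a boundedly exhaustive linear topology on $F$ weaker than the norm topology. (i) If $E\subset F$ is a closed subspace on which $\tau$ agrees with the norm topology, then $E$ is $\infty$-dispersed; if every $\tau$-null sequence in $E$ is norm-null, then $E$ is dispersed. (ii) If a bounded operator $T:F\to H$ complements $\tau$, then $T$ is $\infty$-DNS; if $T$ sequentially complements $\tau$, then $T$ is DNS.
   Context: $\tau$ is boundedly exhaustive if every norm-bounded disjoint sequence ($|f_n|\wedge|f_m|=0$, $n\neq m$) is $\tau$-null. $T$ complements (resp. sequentially complements) $\tau$ if no net (resp. sequence) $(f_p)$ in the unit sphere $\mathrm{S}_F$ is $\tau$-null with $\|Tf_p\|\to0$. $T$ is DNS if no disjoint $(f_n)\subset\mathrm{S}_F$ has $\|Tf_n\|\to0$; $\infty$-DNS if there is $r>0$ with $\liminf_n\|Tf_n\|>r$ for all disjoint $(f_n)\subset\mathrm{S}_F$. $E$ is dispersed if $\liminf_n d(f_n,E)>0$ for all disjoint $(f_n)\subset\mathrm{S}_F$ (equivalently no unit vectors $e_n\in E$ and disjoint $f_n$ with $\|e_n-f_n\|\to0$); $\infty$-dispersed if there is $r>0$ with $\liminf_n d(f_n,E)>r$ for all disjoint $(f_n)\subset\mathrm{S}_F$. *)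

theory Defs
  imports "HOL-Analysis.Analysis"
begin

class banach_lattice = banach + ordered_real_vector + lattice +
  assumes lattice_norm_mono:
    "sup x (- x) \<le> sup y (- y) \<Longrightarrow> norm x \<le> norm y"

definition labs :: "'a::banach_lattice \<Rightarrow> 'a" where
  "labs x = sup x (- x)"

definition disjoint_seq :: "(nat \<Rightarrow> 'a::banach_lattice) \<Rightarrow> bool" where
  "disjoint_seq f \<longleftrightarrow> (\<forall>n m. n \<noteq> m \<longrightarrow> inf (labs (f n)) (labs (f m)) = 0)"

definition linear_topology :: "'a::real_normed_vector topology \<Rightarrow> bool" where
  "linear_topology \<tau> \<longleftrightarrow>
     topspace \<tau> = UNIV \<and>
     continuous_map (prod_topology \<tau> \<tau>) \<tau> (\<lambda>(x, y). x + y) \<and>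
     continuous_map (prod_topology euclideanreal \<tau>) \<tau> (\<lambda>(c, x). c *\<^sub>R x)"

definition weaker_than_norm :: "'a::real_normed_vector topology \<Rightarrow> bool" where
  "weaker_than_norm \<tau> \<longleftrightarrow> (\<forall>U. openin \<tau> U \<longrightarrow> open U)"

definition bdd_exhaustive :: "'a::banach_lattice topology \<Rightarrow> bool" where
  "bdd_exhaustive \<tau> \<longleftrightarrow>
     (\<forall>f. bounded (range f) \<and> disjoint_seq f \<longrightarrow> limitin \<tau> f 0 sequentially)"

text \<open>Nets are represented by (proper) filters on \<open>F\<close>: the net is the identity
  along the filter.\<close>
definition complements ::
    "'a::banach_lattice topology \<Rightarrow> ('a \<Rightarrow> 'b::real_normed_vector) \<Rightarrow> bool" where
  "complements \<tau> T \<longleftrightarrow>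
     \<not> (\<exists>N :: 'a filter. N \<noteq> bot \<and> eventually (\<lambda>x. x \<in> sphere 0 1) N \<and>
           limitin \<tau> (\<lambda>x. x) 0 N \<and> ((\<lambda>x. norm (T x)) \<longlongrightarrow> 0) N)"

definition seq_complements ::
    "'a::banach_lattice topology \<Rightarrow> ('a \<Rightarrow> 'b::real_normed_vector) \<Rightarrow> bool" where
  "seq_complements \<tau> T \<longleftrightarrow>
     \<not> (\<exists>f :: nat \<Rightarrow> 'a. (\<forall>n. f n \<in> sphere 0 1) \<and>
           limitin \<tau> f 0 sequentially \<and> (\<lambda>n. norm (T (f n))) \<longlonglongrightarrow> 0)"

definition DNS :: "('a::banach_lattice \<Rightarrow> 'b::real_normed_vector) \<Rightarrow> bool" where
  "DNS T \<longleftrightarrow>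
     \<not> (\<exists>f. (\<forall>n. f n \<in> sphere 0 1) \<and> disjoint_seq f \<and> (\<lambda>n. norm (T (f n))) \<longlonglongrightarrow> 0)"

definition inf_DNS :: "('a::banach_lattice \<Rightarrow> 'b::real_normed_vector) \<Rightarrow> bool" where
  "inf_DNS T \<longleftrightarrow>
     (\<exists>r>0. \<forall>f. (\<forall>n. f n \<in> sphere 0 1) \<and> disjoint_seq f \<longrightarrow>
        liminf (\<lambda>n. ereal (norm (T (f n)))) > ereal r)"

definition dispersed :: "'a::banach_lattice set \<Rightarrow> bool" where
  "dispersed E \<longleftrightarrow>
     (\<forall>f. (\<forall>n. f n \<in> sphere 0 1) \<and> disjoint_seq f \<longrightarrow>
        liminf (\<lambda>n. ereal (infdist (f n) E)) > 0)"

definition inf_dispersed :: "'a::banach_lattice set \<Rightarrow> bool" where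
  "inf_dispersed E \<longleftrightarrow>
     (\<exists>r>0. \<forall>f. (\<forall>n. f n \<in> sphere 0 1) \<and> disjoint_seq f \<longrightarrow>
        liminf (\<lambda>n. ereal (infdist (f n) E)) > ereal r)"

end

(* Bounded exhaustivity makes every normalized disjoint sequence tau-null. If T fails to be
   (infinity-)DNS, or E fails to be (infinity-)dispersed, such sequences therefore produce unit
   vectors that are tau-small and at the same time have small image under T, resp. lie close
   to E. Near E this contradicts the agreement of tau with the norm on E (a tau-small point of
   E is norm-small, but it is close to a unit vector); for T it directly yields the tau-null
   net or sequence of unit vectors that complementation forbids. *)
theory Submission
  imports Defs
begin

lemma infdist_lessE:
  assumes "infdist x E < d" "E \<noteq> {}"
  obtains e where "e \<in> E" "dist x e < d"
proof -
  have "bdd_below ((\<lambda>a. dist x a) ` E)" by (rule bdd_belowI[of _ 0]) auto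
  then show ?thesis using assms that by (auto simp: infdist_notempty cINF_less_iff)
qed

lemma infdist_null_approximants:
  fixes x :: "nat \<Rightarrow> 'a::real_normed_vector"
  assumes "E \<noteq> {}" and null: "(\<lambda>k. infdist (x k) E) \<longlonglongrightarrow> 0"
  obtains e where "\<And>k. e k \<in> E" "(\<lambda>k. e k - x k) \<longlonglongrightarrow> 0"
proof -
  have "infdist (x k) E < infdist (x k) E + 1 / Suc k" for k
    by simp
  then have "\<exists>e. \<forall>k. e k \<in> E \<and> dist (x k) (e k) < infdist (x k) E + 1 / Suc k"
    using infdist_lessE[OF _ assms(1)] by (intro choice) blast
  then obtain e where e: "\<And>k. e k \<in> E"
    and close: "\<And>k. dist (x k) (e k) < infdist (x k) E + 1 / Suc k"
    by blast
  have upper: "(\<lambda>k. infdist (x k) E + 1 / real (Suc k)) \<longlonglongrightarrow> 0 + 0"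
    by (intro tendsto_add null LIMSEQ_inverse_real_of_nat[simplified inverse_eq_divide])
  have "\<forall>\<^sub>F k in sequentially. dist (x k) (e k) \<le> infdist (x k) E + 1 / real (Suc k)"
    using close by (simp add: less_imp_le)
  from tendsto_sandwich[OF _ this tendsto_const upper[unfolded add_0]]
  have "(\<lambda>k. norm (e k - x k)) \<longlonglongrightarrow> 0"
    by (simp add: dist_norm norm_minus_commute)
  then have "(\<lambda>k. e k - x k) \<longlonglongrightarrow> 0"
    by (rule tendsto_norm_zero_cancel)
  with e that show ?thesis by blast
qed

lemma frequently_less_if_not_Liminf_greater:
  fixes X :: "nat \<Rightarrow> ereal"
  assumes "\<not> liminf X > c" "c < d"
  shows "\<exists>\<^sub>F n in sequentially. X n < d"
proof (rule ccontr)
  assume "\<not> ?thesis"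
  then have "d \<le> liminf X"
    by (intro Liminf_bounded) (simp add: not_frequently not_less)
  with assms show False by simp
qed

lemma subseq_tendsto_zero_if_not_liminf_pos:
  fixes g :: "nat \<Rightarrow> real"
  assumes nonneg: "\<And>n. 0 \<le> g n" and "\<not> liminf (\<lambda>n. ereal (g n)) > 0"
  obtains r where "strict_mono r" "(\<lambda>k. g (r k)) \<longlonglongrightarrow> 0"
proof -
  have "0 \<le> liminf (\<lambda>n. ereal (g n))"
    by (intro Liminf_bounded always_eventually) (simp add: nonneg)
  with assms(2) have "liminf (\<lambda>n. ereal (g n)) = 0" by simp
  moreover obtain r where "strict_mono r"
      "((\<lambda>n. ereal (g n)) \<circ> r) \<longlonglongrightarrow> liminf (\<lambda>n. ereal (g n))"
    using liminf_subseq_lim by blast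
  ultimately have "strict_mono r" "(\<lambda>k. ereal (g (r k))) \<longlonglongrightarrow> ereal 0"
    by (simp_all add: o_def zero_ereal_def)
  with that show ?thesis by (simp add: lim_ereal)
qed

lemma linear_topology_zero_in_topspace:
  "linear_topology \<tau> \<Longrightarrow> (0::'a::real_normed_vector) \<in> topspace \<tau>"
  by (simp add: linear_topology_def)

lemma limitin_if_norm_tendsto:
  assumes "linear_topology \<tau>" "weaker_than_norm \<tau>" "(f \<longlongrightarrow> 0) F"
  shows "limitin \<tau> f 0 F"
  using assms topological_tendstoD[OF assms(3)]
  by (auto simp: limitin_def linear_topology_def weaker_than_norm_def)

lemma limitin_add_zero:
  assumes lin: "linear_topology \<tau>" and "limitin \<tau> f 0 F" "limitin \<tau> g 0 F"
  shows "limitin \<tau> (\<lambda>n. f n + g n) 0 F"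
proof -
  have "limitin (prod_topology \<tau> \<tau>) (\<lambda>n. (f n, g n)) (0, 0) F"
    using assms by (simp add: limitin_pairwise o_def)
  from continuous_map_limit[OF _ this, of \<tau> "\<lambda>(x, y). x + y"] lin show ?thesis
    by (simp add: linear_topology_def o_def)
qed

lemma linear_topology_nhd_plus_ball:
  assumes lin: "linear_topology \<tau>" and weak: "weaker_than_norm \<tau>"
    and V: "openin \<tau> V" "0 \<in> V"
  obtains W \<delta> where "openin \<tau> W" "0 \<in> W" "\<delta> > 0"
    "\<And>x y. x \<in> W \<Longrightarrow> norm y < \<delta> \<Longrightarrow> x + y \<in> V"
proof -
  have "continuous_map (prod_topology \<tau> \<tau>) \<tau> (\<lambda>(x, y). x + y)"
    using lin by (simp add: linear_topology_def)
  from openin_continuous_map_preimage[OF this V(1)] lin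
  have "openin (prod_topology \<tau> \<tau>) {z. (\<lambda>(x, y). x + y) z \<in> V}"
    by (simp add: linear_topology_def)
  from this[unfolded openin_prod_topology_alt, rule_format, of 0 0] V(2)
  obtain W1 W2 where W: "openin \<tau> W1" "openin \<tau> W2" "0 \<in> W1" "0 \<in> W2"
      "W1 \<times> W2 \<subseteq> {z. (\<lambda>(x, y). x + y) z \<in> V}"
    by auto
  have "open W2" using W(2) weak by (simp add: weaker_than_norm_def)
  then obtain \<delta> where "\<delta> > 0" "ball 0 \<delta> \<subseteq> W2" using W(4) open_contains_ball by blast
  show ?thesis
  proof (rule that[OF W(1,3) \<open>\<delta> > 0\<close>])
    fix x y :: 'a assume "x \<in> W1" "norm y < \<delta>"
    then have "(x, y) \<in> W1 \<times> W2" using \<open>ball 0 \<delta> \<subseteq> W2\<close> by auto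
    then show "x + y \<in> V" using W(5) by auto
  qed
qed

lemma bdd_exhaustive_limitin_sphere:
  assumes "bdd_exhaustive \<tau>" "\<And>n. f n \<in> sphere 0 1" "disjoint_seq f"
  shows "limitin \<tau> f 0 sequentially"
proof -
  have "bounded (range f)"
    using assms(2) by (intro bounded_subset[OF bounded_cball[of 0 1]]) auto
  with assms show ?thesis unfolding bdd_exhaustive_def by blast
qed

lemma disjoint_seq_comp_strict_mono:
  "disjoint_seq f \<Longrightarrow> strict_mono r \<Longrightarrow> disjoint_seq (f \<circ> r)"
  unfolding disjoint_seq_def by (auto simp: strict_mono_eq)

lemma bdd_exhaustive_small_unit_vector:
  assumes exh: "bdd_exhaustive \<tau>"
    and not_unif: "\<not> (\<exists>r>0. \<forall>f. (\<forall>n. f n \<in> sphere 0 1) \<and> disjoint_seq f \<longrightarrow>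
                        liminf (\<lambda>n. ereal (g (f n))) > ereal r)"
    and U: "openin \<tau> U" "0 \<in> U" and "r > 0"
  obtains x where "x \<in> sphere 0 1" "x \<in> U" "g x < r"
proof -
  obtain f where f: "\<And>n. f n \<in> sphere 0 1" "disjoint_seq f"
      "\<not> liminf (\<lambda>n. ereal (g (f n))) > ereal (r/2)"
    using not_unif \<open>r > 0\<close> by (metis half_gt_zero)
  have "\<exists>\<^sub>F n in sequentially. g (f n) < r"
    using frequently_less_if_not_Liminf_greater[OF f(3), of "ereal r"] \<open>r > 0\<close> by simp
  moreover have "\<forall>\<^sub>F n in sequentially. f n \<in> U"
    using bdd_exhaustive_limitin_sphere[OF exh f(1,2)] U unfolding limitin_def by blast
  ultimately have "\<exists>\<^sub>F n in sequentially. g (f n) < r \<and> f n \<in> U"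
    by (rule frequently_eventually_frequently)
  then obtain n where "g (f n) < r" "f n \<in> U" by (auto dest: frequently_ex)
  with f(1) that show ?thesis by blast
qed

text \<open>The net is the identity along the filter generated by the sets of unit vectors
  in a \<open>\<tau>\<close>-neighbourhood \<open>U\<close> of \<open>0\<close> with \<open>\<parallel>T x\<parallel> < r\<close>.\<close>
lemma not_complementsI:
  assumes zero: "0 \<in> topspace \<tau>"
    and small: "\<And>U r. openin \<tau> U \<Longrightarrow> 0 \<in> U \<Longrightarrow> r > 0 \<Longrightarrow>
                  \<exists>x. x \<in> sphere 0 1 \<and> x \<in> U \<and> norm (T x) < r"
  shows "\<not> complements \<tau> T"
proof -
  define I where "I = {(r, U). r > (0::real) \<and> openin \<tau> U \<and> 0 \<in> U}"
  define S where "S = (\<lambda>(r, U). {x \<in> sphere 0 1 \<inter> U. norm (T x) < r})"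
  define N where "N = (INF i\<in>I. principal (S i))"
  have "(1, topspace \<tau>) \<in> I" using zero by (simp add: I_def)
  then have "I \<noteq> {}" by blast
  moreover have "\<exists>k\<in>I. principal (S k) \<le> inf (principal (S i)) (principal (S j))"
    if "i \<in> I" "j \<in> I" for i j
    using that by (intro bexI[of _ "(min (fst i) (fst j), snd i \<inter> snd j)"])
      (auto simp: I_def S_def openin_Int)
  ultimately have ev_N: "eventually P N \<longleftrightarrow> (\<exists>i\<in>I. \<forall>x\<in>S i. P x)" for P
    unfolding N_def by (subst eventually_INF_base) (auto simp: eventually_principal)
  have "S i \<noteq> {}" if "i \<in> I" for i
    using that small by (fastforce simp: I_def S_def)
  then have "N \<noteq> bot"
    by (auto simp: trivial_limit_def ev_N)
  moreover have "eventually (\<lambda>x. x \<in> sphere 0 1) N"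
    unfolding ev_N by (rule bexI[OF _ \<open>(1, topspace \<tau>) \<in> I\<close>]) (simp add: S_def)
  moreover have "limitin \<tau> (\<lambda>x. x) 0 N"
  proof -
    have "eventually (\<lambda>x. x \<in> U) N" if "openin \<tau> U" "0 \<in> U" for U
      unfolding ev_N using that by (intro bexI[of _ "(1, U)"]) (auto simp: I_def S_def)
    with zero show ?thesis by (simp add: limitin_def)
  qed
  moreover have "((\<lambda>x. norm (T x)) \<longlongrightarrow> 0) N"
  proof (rule tendstoI)
    fix e :: real assume "e > 0"
    then have "(e, topspace \<tau>) \<in> I" using zero by (simp add: I_def)
    then show "\<forall>\<^sub>F x in N. dist (norm (T x)) 0 < e"
      unfolding ev_N by (rule bexI[rotated]) (simp add: S_def)
  qed
  ultimately show ?thesis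
    unfolding complements_def not_not by (intro exI[of _ N]) simp
qed


lemma DNS_if_seq_complements:
  assumes "bdd_exhaustive \<tau>" "seq_complements \<tau> T"
  shows "DNS T"
  using assms bdd_exhaustive_limitin_sphere unfolding DNS_def seq_complements_def by blast

lemma inf_DNS_if_complements:
  assumes lin: "linear_topology \<tau>" and exh: "bdd_exhaustive \<tau>" and "complements \<tau> T"
  shows "inf_DNS T"
proof (rule ccontr)
  assume not_inf_DNS: "\<not> inf_DNS T"
  have "\<exists>x. x \<in> sphere 0 1 \<and> x \<in> U \<and> norm (T x) < r"
    if "openin \<tau> U" "0 \<in> U" "r > 0" for U r
    by (rule bdd_exhaustive_small_unit_vector[OF exh _ that, of "\<lambda>x. norm (T x)"])
      (use not_inf_DNS in \<open>auto simp: inf_DNS_def\<close>)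
  with linear_topology_zero_in_topspace[OF lin] have "\<not> complements \<tau> T"
    by (rule not_complementsI)
  with assms show False by blast
qed

text \<open>Choose a \<open>\<tau>\<close>-neighbourhood \<open>W\<close> of \<open>0\<close> and \<open>\<delta>\<close> such that the points of \<open>E\<close> in
  \<open>W + ball 0 \<delta>\<close> have norm \<open>< 1/2\<close>; a unit vector of \<open>W\<close> within \<open>min \<delta> (1/2)\<close> of \<open>E\<close>
  is then impossible.\<close>
lemma inf_dispersed_if_subtopology_eq:
  assumes lin: "linear_topology \<tau>" and weak: "weaker_than_norm \<tau>" and exh: "bdd_exhaustive \<tau>"
    and "subspace E" and agree: "subtopology \<tau> E = top_of_set E"
  shows "inf_dispersed E"
proof (rule ccontr)
  assume not_inf_dispersed: "\<not> inf_dispersed E"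
  have "0 \<in> E" using \<open>subspace E\<close> by (rule subspace_0)
  have "openin (subtopology \<tau> E) (E \<inter> ball 0 (1/2))"
    unfolding agree by (auto simp: openin_open)
  then obtain V where V: "openin \<tau> V" "E \<inter> ball 0 (1/2) = V \<inter> E"
    by (auto simp: openin_subtopology)
  have "0 \<in> E \<inter> ball 0 (1/2)" using \<open>0 \<in> E\<close> by simp
  with V(2) have "0 \<in> V" by blast
  obtain W \<delta> where W: "openin \<tau> W" "0 \<in> W" and "\<delta> > 0"
    and plus: "\<And>x y. x \<in> W \<Longrightarrow> norm y < \<delta> \<Longrightarrow> x + y \<in> V"
    using linear_topology_nhd_plus_ball[OF lin weak V(1) \<open>0 \<in> V\<close>] by blast
  have "min \<delta> (1/2) > 0" using \<open>\<delta> > 0\<close> by simp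
  with bdd_exhaustive_small_unit_vector[OF exh not_inf_dispersed[unfolded inf_dispersed_def] W]
  obtain x where x: "x \<in> sphere 0 1" "x \<in> W" "infdist x E < min \<delta> (1/2)" .
  then obtain e where "e \<in> E" and e: "dist x e < min \<delta> (1/2)"
    using infdist_lessE \<open>0 \<in> E\<close> by blast
  have "norm (e - x) < \<delta>"
    using e by (simp add: dist_norm norm_minus_commute)
  from plus[OF x(2) this] have "e \<in> V" by simp
  with V(2) \<open>e \<in> E\<close> have "norm e < 1/2" by auto
  moreover have "norm x - norm e < 1/2"
    using norm_triangle_ineq2[of x e] e by (simp add: dist_norm)
  ultimately show False using x(1) by simp
qed

text \<open>Along a subsequence the distance to \<open>E\<close> tends to \<open>0\<close>; the nearby points of \<open>E\<close>
  then form a \<open>\<tau>\<close>-null, hence norm-null sequence, forcing the unit vectors to be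
  norm-null as well.\<close>
lemma dispersed_if_tau_null_imp_norm_null:
  assumes lin: "linear_topology \<tau>" and weak: "weaker_than_norm \<tau>" and exh: "bdd_exhaustive \<tau>"
    and "subspace E"
    and null: "\<And>f. (\<forall>n. f n \<in> E) \<Longrightarrow> limitin \<tau> f 0 sequentially \<Longrightarrow> f \<longlonglongrightarrow> 0"
  shows "dispersed E"
  unfolding dispersed_def
proof (intro allI impI; elim conjE)
  fix f :: "nat \<Rightarrow> 'a" assume unit: "\<forall>n. f n \<in> sphere 0 1" and "disjoint_seq f"
  show "liminf (\<lambda>n. ereal (infdist (f n) E)) > 0"
  proof (rule ccontr)
    assume "\<not> ?thesis"
    then obtain r where r: "strict_mono r" "(\<lambda>k. infdist (f (r k)) E) \<longlonglongrightarrow> 0"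
      by (rule subseq_tendsto_zero_if_not_liminf_pos[OF infdist_nonneg])
    have "E \<noteq> {}" using subspace_0[OF \<open>subspace E\<close>] by blast
    then obtain e where e: "\<And>k. e k \<in> E" and close: "(\<lambda>k. e k - f (r k)) \<longlonglongrightarrow> 0"
      by (rule infdist_null_approximants[OF _ r(2)]) blast
    have "limitin \<tau> (\<lambda>k. f (r k)) 0 sequentially"
      using bdd_exhaustive_limitin_sphere[OF exh _ disjoint_seq_comp_strict_mono[OF _ r(1)]]
        unit \<open>disjoint_seq f\<close> by (simp add: o_def)
    from limitin_add_zero[OF lin this limitin_if_norm_tendsto[OF lin weak close]]
    have "e \<longlonglongrightarrow> 0" using null e by simp
    from tendsto_diff[OF this close] have "(\<lambda>k. f (r k)) \<longlonglongrightarrow> 0" by simp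
    then have "(\<lambda>k. norm (f (r k))) \<longlonglongrightarrow> 0" by (rule tendsto_norm_zero)
    with unit show False by (simp add: LIMSEQ_const_iff)
  qed
qed

theorem mainTheorem14:
  fixes \<tau> :: "'a::banach_lattice topology"
  assumes lin: "linear_topology \<tau>"
    and weak: "weaker_than_norm \<tau>"
    and exh: "bdd_exhaustive \<tau>"
  shows "(\<forall>E :: 'a set. subspace E \<and> closed E \<and> subtopology \<tau> E = top_of_set E
            \<longrightarrow> inf_dispersed E)
       \<and> (\<forall>E :: 'a set. subspace E \<and> closed E \<and>
            (\<forall>f. (\<forall>n. f n \<in> E) \<and> limitin \<tau> f 0 sequentially \<longrightarrow> f \<longlonglongrightarrow> 0)
            \<longrightarrow> dispersed E)
       \<and> (\<forall>T :: 'a \<Rightarrow> 'b::banach. bounded_linear T \<and> complements \<tau> T \<longrightarrow> inf_DNS T)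
       \<and> (\<forall>T :: 'a \<Rightarrow> 'b::banach. bounded_linear T \<and> seq_complements \<tau> T \<longrightarrow> DNS T)"
  using inf_dispersed_if_subtopology_eq[OF lin weak exh]
    dispersed_if_tau_null_imp_norm_null[OF lin weak exh]
    inf_DNS_if_complements[OF lin exh] DNS_if_seq_complements[OF exh]
  by blast

end
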